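(* Let $\mathcal{G}=(G,\odot,\leq)$ be a real continuous Alo-group with $G$ an open interval of $\mathbb{R}$, and let $\tilde A=([a_{ij}^-,a_{ij}^+])$ be an $n\times n$ $[\mathcal{G}]$-reciprocal IPCM. The following are equivalent: (1) $\tilde A$ is $[\mathcal{G}]$-consistent; (2) $a_{ik}^-\odot a_{ik}^+=a_{ij}^-\odot a_{ij}^+\odot a_{jk}^-\odot a_{jk}^+$ for all $i,j,k\in\{1,\dots,n\}$; (3) $a_{ik}^-\odot a_{ik}^+=a_{ij}^-\odot a_{ij}^+\odot a_{jk}^-\odot a_{jk}^+$ for all $i<j<k$.
   Context: An Alo-group $(G,\odot,\leq)$ is an Abelian group with a weak order $\leq$ such that $a\leq b\Rightarrow a\odot c\leq b\odot c$; real means $G\subseteq\mathbb{R}$ with usual order, continuous means $\odot$ is continuous. $[G]=\{[a^-,a^+]: a^-,a^+\in G,\ a^-\leq a^+\}$; $\tilde a^{(-1)}=[(a^+)^{(-1)},(a^-)^{(-1)}]$; $\tilde a\odot_{[G]}\tilde b=\{a\odot b: a\in\tilde a,b\in\tilde b\}$. An IPCM is an $n\times n$ matrix with entries in $[G]$; $[\mathcal{G}]$-reciprocal means $\tilde a_{ji}=\tilde a_{ij}^{(-1)}$ for all $i,j$. $\tilde A$ is $[\mathcal{G}]$-consistent if $\tilde a_{ij}\odot_{[G]}\tilde a_{jk}\odot_{[G]}\tilde a_{ki}=\tilde a_{ik}\odot_{[G]}\tilde a_{kj}\odot_{[G]}\tilde a_{ji}$ for all $i,j,k\in\{1,\dots,n\}$.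 *)

theory Defs
  imports "HOL-Analysis.Analysis"
begin

definition real_alo_group :: "real set \<Rightarrow> (real \<Rightarrow> real \<Rightarrow> real) \<Rightarrow> bool" where
  "real_alo_group G op \<longleftrightarrow>
     (\<forall>a\<in>G. \<forall>b\<in>G. op a b \<in> G) \<and>
     (\<forall>a\<in>G. \<forall>b\<in>G. \<forall>c\<in>G. op (op a b) c = op a (op b c)) \<and>
     (\<forall>a\<in>G. \<forall>b\<in>G. op a b = op b a) \<and>
     (\<exists>e\<in>G. (\<forall>a\<in>G. op a e = a) \<and> (\<forall>a\<in>G. \<exists>b\<in>G. op a b = e)) \<and>
     (\<forall>a\<in>G. \<forall>b\<in>G. \<forall>c\<in>G. a \<le> b \<longrightarrow> op a c \<le> op b c)"

definition continuous_alo_group :: "real set \<Rightarrow> (real \<Rightarrow> real \<Rightarrow> real) \<Rightarrow> bool" where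
  "continuous_alo_group G op \<longleftrightarrow>
     real_alo_group G op \<and> continuous_on (G \<times> G) (\<lambda>(a, b). op a b)"

definition alo_unit :: "real set \<Rightarrow> (real \<Rightarrow> real \<Rightarrow> real) \<Rightarrow> real" where
  "alo_unit G op = (THE e. e \<in> G \<and> (\<forall>a\<in>G. op a e = a))"

definition alo_inv :: "real set \<Rightarrow> (real \<Rightarrow> real \<Rightarrow> real) \<Rightarrow> real \<Rightarrow> real" where
  "alo_inv G op a = (THE b. b \<in> G \<and> op a b = alo_unit G op)"

text \<open>An interval [a^-, a^+] of [G] is represented by the pair (a^-, a^+).\<close>
definition in_intG :: "real set \<Rightarrow> real \<times> real \<Rightarrow> bool" where
  "in_intG G x \<longleftrightarrow> fst x \<in> G \<and> snd x \<in> G \<and> fst x \<le> snd x"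

definition int_set :: "real \<times> real \<Rightarrow> real set" where
  "int_set x = {fst x .. snd x}"

definition set_op :: "(real \<Rightarrow> real \<Rightarrow> real) \<Rightarrow> real set \<Rightarrow> real set \<Rightarrow> real set" where
  "set_op op X Y = {op a b | a b. a \<in> X \<and> b \<in> Y}"

definition int_inv :: "real set \<Rightarrow> (real \<Rightarrow> real \<Rightarrow> real) \<Rightarrow> real \<times> real \<Rightarrow> real \<times> real" where
  "int_inv G op x = (alo_inv G op (snd x), alo_inv G op (fst x))"

text \<open>n x n IPCM with indices 0..n-1 (entries given as pairs).\<close>
definition is_IPCM :: "real set \<Rightarrow> nat \<Rightarrow> (nat \<Rightarrow> nat \<Rightarrow> real \<times> real) \<Rightarrow> bool" where
  "is_IPCM G n A \<longleftrightarrow> (\<forall>i<n. \<forall>j<n. in_intG G (A i j))"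

definition G_reciprocal :: "real set \<Rightarrow> (real \<Rightarrow> real \<Rightarrow> real) \<Rightarrow> nat \<Rightarrow> (nat \<Rightarrow> nat \<Rightarrow> real \<times> real) \<Rightarrow> bool" where
  "G_reciprocal G op n A \<longleftrightarrow> (\<forall>i<n. \<forall>j<n. A j i = int_inv G op (A i j))"

definition G_consistent :: "(real \<Rightarrow> real \<Rightarrow> real) \<Rightarrow> nat \<Rightarrow> (nat \<Rightarrow> nat \<Rightarrow> real \<times> real) \<Rightarrow> bool" where
  "G_consistent op n A \<longleftrightarrow> (\<forall>i<n. \<forall>j<n. \<forall>k<n.
     set_op op (set_op op (int_set (A i j)) (int_set (A j k))) (int_set (A k i)) =
     set_op op (set_op op (int_set (A i k)) (int_set (A k j))) (int_set (A j i)))"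

end

theory Submission
  imports Defs
begin

text \<open>In a continuous real Alo-group on an interval, the product of two intervals is the interval
  of the products of their endpoints: monotonicity bounds it, and the continuous image of the
  connected rectangle fills the gap. Hence, using reciprocity, the consistency condition at
  \<open>(i, j, k)\<close> is an equality of two intervals, i.e. of their lower and of their upper endpoints,
  and each of these two equations is equivalent to \<open>q\<^sub>i\<^sub>k = q\<^sub>i\<^sub>j \<odot> q\<^sub>j\<^sub>k\<close> for
  \<open>q\<^sub>i\<^sub>j = a\<^sub>i\<^sub>j\<^sup>- \<odot> a\<^sub>i\<^sub>j\<^sup>+\<close>. Since \<open>q\<^sub>j\<^sub>i = q\<^sub>i\<^sub>j\<^sup>-\<^sup>1\<close>, this relation is invariant under
  permuting \<open>i, j, k\<close>, so it suffices to require it for \<open>i < j < k\<close>.\<close>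

lemma ternary_from_increasing:
  fixes P :: "'a::linorder \<Rightarrow> 'a \<Rightarrow> 'a \<Rightarrow> bool"
  assumes swap12: "\<And>i j k. i \<in> I \<Longrightarrow> j \<in> I \<Longrightarrow> k \<in> I \<Longrightarrow> P i j k \<Longrightarrow> P j i k"
    and swap23: "\<And>i j k. i \<in> I \<Longrightarrow> j \<in> I \<Longrightarrow> k \<in> I \<Longrightarrow> P i j k \<Longrightarrow> P i k j"
    and repeated: "\<And>i k. i \<in> I \<Longrightarrow> k \<in> I \<Longrightarrow> P i i k"
    and increasing: "\<And>i j k. i \<in> I \<Longrightarrow> j \<in> I \<Longrightarrow> k \<in> I \<Longrightarrow> i < j \<Longrightarrow> j < k \<Longrightarrow> P i j k"
    and "i \<in> I" "j \<in> I" "k \<in> I"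
  shows "P i j k"
proof -
  have sorted: "P a b c" if "a \<in> I" "b \<in> I" "c \<in> I" "a \<le> b" "b \<le> c" for a b c
  proof (cases "a = b")
    case False
    show ?thesis
    proof (cases "b = c")
      case True
      then show ?thesis using that repeated swap12 swap23 by metis
    qed (use False that increasing in auto)
  qed (use that repeated in simp)
  show ?thesis
    using sorted swap12 swap23 assms(5-7) by (metis linorder_linear)
qed

locale alo_group =
  fixes G :: "real set" and op :: "real \<Rightarrow> real \<Rightarrow> real"
  assumes alo: "real_alo_group G op"
begin

abbreviation unit_G :: real where "unit_G \<equiv> alo_unit G op"

abbreviation inv_G :: "real \<Rightarrow> real" where "inv_G \<equiv> alo_inv G op"

lemma op_closed [simp]: "a \<in> G \<Longrightarrow> b \<in> G \<Longrightarrow> op a b \<in> G"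
  using alo unfolding real_alo_group_def by blast

lemma op_assoc: "a \<in> G \<Longrightarrow> b \<in> G \<Longrightarrow> c \<in> G \<Longrightarrow> op (op a b) c = op a (op b c)"
  using alo unfolding real_alo_group_def by blast

lemma op_commute: "a \<in> G \<Longrightarrow> b \<in> G \<Longrightarrow> op a b = op b a"
  using alo unfolding real_alo_group_def by blast

lemma op_left_commute: "a \<in> G \<Longrightarrow> b \<in> G \<Longrightarrow> c \<in> G \<Longrightarrow> op a (op b c) = op b (op a c)"
  by (metis op_assoc op_commute)

lemmas op_ac = op_assoc op_commute op_left_commute

lemma op_mono:
  assumes "a \<in> G" "a' \<in> G" "b \<in> G" "b' \<in> G" "a \<le> a'" "b \<le> b'"
  shows "op a b \<le> op a' b'"
proof -
  have mono_left: "op x z \<le> op y z" if "x \<in> G" "y \<in> G" "z \<in> G" "x \<le> y" for x y z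
    using alo that unfolding real_alo_group_def by blast
  have "op a b \<le> op a' b" using mono_left assms by simp
  also have "\<dots> = op b a'" using assms op_commute by simp
  also have "\<dots> \<le> op b' a'" using mono_left assms by simp
  also have "\<dots> = op a' b'" using assms op_commute by simp
  finally show ?thesis .
qed

lemma unit_G_property: "unit_G \<in> G \<and> (\<forall>a\<in>G. op a unit_G = a)"
proof -
  obtain u where u: "u \<in> G" "\<forall>a\<in>G. op a u = a"
    using alo unfolding real_alo_group_def by blast
  have "alo_unit G op = u"
    unfolding alo_unit_def by (rule the_equality) (use u op_commute in metis)+
  with u show ?thesis by simp
qed

lemma unit_G_closed [simp]: "unit_G \<in> G"
  and op_unit_right [simp]: "a \<in> G \<Longrightarrow> op a unit_G = a"
  and op_unit_left [simp]: "a \<in> G \<Longrightarrow> op unit_G a = a"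
  using unit_G_property op_commute by metis+

lemma inv_G_property:
  assumes "a \<in> G"
  shows "inv_G a \<in> G \<and> op a (inv_G a) = unit_G"
proof -
  obtain b where b: "b \<in> G" "op a b = unit_G"
    using alo assms unit_G_property unfolding real_alo_group_def by (metis op_unit_right)
  have "alo_inv G op a = b"
    unfolding alo_inv_def
  proof (rule the_equality)
    fix x assume x: "x \<in> G \<and> op a x = unit_G"
    have "x = op (op x a) b" using assms b x by (simp add: op_assoc)
    also have "\<dots> = b" using assms b x by (simp add: op_commute)
    finally show "x = b" .
  qed (use b in simp)
  with b show ?thesis by simp
qed

lemma inv_G_closed [simp]: "a \<in> G \<Longrightarrow> inv_G a \<in> G"
  and op_inv_right [simp]: "a \<in> G \<Longrightarrow> op a (inv_G a) = unit_G"
  and op_inv_left [simp]: "a \<in> G \<Longrightarrow> op (inv_G a) a = unit_G"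
  using inv_G_property op_commute by metis+

lemma op_inv_cancel_left [simp]: "a \<in> G \<Longrightarrow> b \<in> G \<Longrightarrow> op (inv_G a) (op a b) = b"
  by (metis op_assoc inv_G_closed op_unit_left op_inv_left)

lemma op_cancel_right: "a \<in> G \<Longrightarrow> b \<in> G \<Longrightarrow> c \<in> G \<Longrightarrow> op a c = op b c \<longleftrightarrow> a = b"
  by (metis op_assoc inv_G_closed op_inv_right op_unit_right)

lemma inv_G_unique: "a \<in> G \<Longrightarrow> b \<in> G \<Longrightarrow> op a b = unit_G \<Longrightarrow> inv_G a = b"
  by (metis op_inv_cancel_left op_unit_right inv_G_closed)

lemma inv_G_op: "a \<in> G \<Longrightarrow> b \<in> G \<Longrightarrow> inv_G (op a b) = op (inv_G a) (inv_G b)"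
  by (rule inv_G_unique) (simp_all add: op_assoc op_left_commute[of b "inv_G a"])

lemma inv_G_antimono:
  assumes "a \<in> G" "b \<in> G" "a \<le> b"
  shows "inv_G b \<le> inv_G a"
proof -
  have "unit_G \<le> op b (inv_G a)"
    using op_mono[of a b "inv_G a" "inv_G a"] assms by simp
  then have "op (inv_G b) unit_G \<le> op (inv_G b) (op b (inv_G a))"
    using assms by (intro op_mono) simp_all
  then show ?thesis using assms by simp
qed

lemma op_inv_eq_op_inv_iff:
  assumes "a \<in> G" "b \<in> G" "c \<in> G" "d \<in> G"
  shows "op a (inv_G b) = op c (inv_G d) \<longleftrightarrow> op a d = op c b"
proof -
  have "op (op a (inv_G b)) (op b d) = op a d"
    using assms by (simp add: op_assoc)
  moreover have "op (op c (inv_G d)) (op b d) = op c b"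
    using assms by (simp add: op_assoc op_left_commute[of "inv_G d" b])
  ultimately show ?thesis
    using op_cancel_right[of "op a (inv_G b)" "op c (inv_G d)" "op b d"] assms by simp
qed

text \<open>The two endpoint equations of the consistency condition have this shape.\<close>

lemma op_op_inv_eq_op_op_inv_iff:
  assumes "a \<in> G" "b \<in> G" "c \<in> G" "d \<in> G" "e \<in> G" "f \<in> G"
  shows "op (op a b) (inv_G c) = op (op d (inv_G e)) (inv_G f)
    \<longleftrightarrow> op c d = op (op a f) (op b e)"
proof -
  have "op (op d (inv_G e)) (inv_G f) = op d (inv_G (op e f))"
    using assms by (simp add: inv_G_op op_assoc)
  moreover have "op (op a b) (op e f) = op (op a f) (op b e)" "op d c = op c d"
    using assms by (simp_all add: op_ac)
  ultimately show ?thesis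
    using op_inv_eq_op_inv_iff[of "op a b" c d "op e f"] assms by auto
qed

lemma transitive_iff_increasing_transitive:
  fixes q :: "nat \<Rightarrow> nat \<Rightarrow> real"
  assumes closed: "\<And>i j. i < n \<Longrightarrow> j < n \<Longrightarrow> q i j \<in> G"
    and reciprocal: "\<And>i j. i < n \<Longrightarrow> j < n \<Longrightarrow> q j i = inv_G (q i j)"
    and diagonal: "\<And>i. i < n \<Longrightarrow> q i i = unit_G"
  shows "(\<forall>i<n. \<forall>j<n. \<forall>k<n. q i k = op (q i j) (q j k)) \<longleftrightarrow>
    (\<forall>i j k. i < j \<and> j < k \<and> k < n \<longrightarrow> q i k = op (q i j) (q j k))"
proof
  assume increasing: "\<forall>i j k. i < j \<and> j < k \<and> k < n \<longrightarrow> q i k = op (q i j) (q j k)"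
  have "q i k = op (q i j) (q j k)" if "i < n" "j < n" "k < n" for i j k
  proof (rule ternary_from_increasing[where I = "{..<n}" and P = "\<lambda>i j k. q i k = op (q i j) (q j k)"])
    fix i j k assume "i \<in> {..<n}" "j \<in> {..<n}" "k \<in> {..<n}"
    then have ijk: "i < n" "j < n" "k < n" by simp_all
    show "q j k = op (q j i) (q i k)" if "q i k = op (q i j) (q j k)"
      using ijk that by (simp add: closed reciprocal[of i j])
    show "q i j = op (q i k) (q k j)" if "q i k = op (q i j) (q j k)"
      using ijk that by (simp add: closed reciprocal[of j k] op_assoc)
  next
    fix i k assume "i \<in> {..<n}" "k \<in> {..<n}"
    then show "q i k = op (q i i) (q i k)" by (simp add: closed diagonal)
  next
    fix i j k assume "k \<in> {..<n}" "i < j" "j < k"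
    then show "q i k = op (q i j) (q j k)" using increasing by simp
  qed (use that in simp_all)
  then show "\<forall>i<n. \<forall>j<n. \<forall>k<n. q i k = op (q i j) (q j k)" by blast
next
  assume all: "\<forall>i<n. \<forall>j<n. \<forall>k<n. q i k = op (q i j) (q j k)"
  show "\<forall>i j k. i < j \<and> j < k \<and> k < n \<longrightarrow> q i k = op (q i j) (q j k)"
  proof (intro allI impI)
    fix i j k assume "i < j \<and> j < k \<and> k < n"
    then have "i < n" "j < n" "k < n" by simp_all
    then show "q i k = op (q i j) (q j k)" using all by blast
  qed
qed
end

locale interval_alo_group = alo_group +
  assumes continuous: "continuous_on (G \<times> G) (\<lambda>(a, b). op a b)"
    and interval: "is_interval G"
begin

lemma set_op_atLeastAtMost:
  assumes G: "a \<in> G" "a' \<in> G" "b \<in> G" "b' \<in> G" and le: "a \<le> a'" "b \<le> b'"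
  shows "set_op op {a..a'} {b..b'} = {op a b..op a' b'}"
proof
  have between: "x \<in> G" if "u \<in> G" "v \<in> G" "x \<in> {u..v}" for u v x
    using interval that unfolding is_interval_1 atLeastAtMost_iff by blast
  have sub: "{a..a'} \<subseteq> G" "{b..b'} \<subseteq> G"
    using between[OF G(1,2)] between[OF G(3,4)] by blast+
  show "set_op op {a..a'} {b..b'} \<subseteq> {op a b..op a' b'}"
  proof
    fix x assume "x \<in> set_op op {a..a'} {b..b'}"
    then obtain c d where cd: "c \<in> {a..a'}" "d \<in> {b..b'}" "x = op c d"
      unfolding set_op_def by blast
    then have "c \<in> G" "d \<in> G" using sub by auto
    then show "x \<in> {op a b..op a' b'}"
      using cd G op_mono[of a c b d] op_mono[of c a' d b'] by auto
  qed
  let ?image = "(\<lambda>(x, y). op x y) ` ({a..a'} \<times> {b..b'})"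
  have "?image = set_op op {a..a'} {b..b'}"
    unfolding set_op_def by fastforce
  moreover have "connected ?image"
    using sub by (intro connected_continuous_image continuous_on_subset[OF continuous])
      (auto simp: connected_Times)
  moreover have "op a b \<in> ?image"
    using le by (intro image_eqI[of _ _ "(a, b)"]) auto
  moreover have "op a' b' \<in> ?image"
    using le by (intro image_eqI[of _ _ "(a', b')"]) auto
  ultimately show "{op a b..op a' b'} \<subseteq> set_op op {a..a'} {b..b'}"
    using connected_contains_Icc by metis
qed

lemma set_op_reciprocal_eq_iff:
  assumes x: "x \<in> G" "x' \<in> G" "x \<le> x'"
    and y: "y \<in> G" "y' \<in> G" "y \<le> y'"
    and z: "z \<in> G" "z' \<in> G" "z \<le> z'"
  shows "set_op op (set_op op {x..x'} {y..y'}) {inv_G z'..inv_G z} =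
         set_op op (set_op op {z..z'} {inv_G y'..inv_G y}) {inv_G x'..inv_G x}
     \<longleftrightarrow> op z z' = op (op x x') (op y y')"
proof -
  have left: "set_op op (set_op op {x..x'} {y..y'}) {inv_G z'..inv_G z} =
      {op (op x y) (inv_G z')..op (op x' y') (inv_G z)}"
    using assms inv_G_antimono[of z z'] op_mono[of x x' y y']
    by (simp add: set_op_atLeastAtMost)
  have right: "set_op op (set_op op {z..z'} {inv_G y'..inv_G y}) {inv_G x'..inv_G x} =
      {op (op z (inv_G y')) (inv_G x')..op (op z' (inv_G y)) (inv_G x)}"
    using assms inv_G_antimono[of y y'] inv_G_antimono[of x x']
      op_mono[of z z' "inv_G y'" "inv_G y"]
    by (simp add: set_op_atLeastAtMost)
  have nonempty: "op (op x y) (inv_G z') \<le> op (op x' y') (inv_G z)"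
    using assms inv_G_antimono[of z z'] by (simp add: op_mono)
  have "op z' z = op z z'" "op (op x' x) (op y' y) = op (op x x') (op y y')"
    using assms by (simp_all add: op_ac)
  then show ?thesis
    unfolding left right Icc_eq_Icc using nonempty assms
    by (simp add: op_op_inv_eq_op_op_inv_iff)
qed

end

locale reciprocal_IPCM = alo_group +
  fixes n :: nat and A :: "nat \<Rightarrow> nat \<Rightarrow> real \<times> real"
  assumes IPCM: "is_IPCM G n A" and reciprocal: "G_reciprocal G op n A"
begin

abbreviation endpoint_product :: "nat \<Rightarrow> nat \<Rightarrow> real"
  where "endpoint_product i j \<equiv> op (fst (A i j)) (snd (A i j))"

lemma entry_closed: "i < n \<Longrightarrow> j < n \<Longrightarrow> fst (A i j) \<in> G \<and> snd (A i j) \<in> G"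
  and entry_le: "i < n \<Longrightarrow> j < n \<Longrightarrow> fst (A i j) \<le> snd (A i j)"
  using IPCM unfolding is_IPCM_def in_intG_def by auto

lemma entry_transpose: "i < n \<Longrightarrow> j < n \<Longrightarrow> A j i = (inv_G (snd (A i j)), inv_G (fst (A i j)))"
  using reciprocal unfolding G_reciprocal_def int_inv_def by blast

lemma endpoint_product_closed: "i < n \<Longrightarrow> j < n \<Longrightarrow> endpoint_product i j \<in> G"
  using entry_closed by simp

lemma endpoint_product_transpose:
  "i < n \<Longrightarrow> j < n \<Longrightarrow> endpoint_product j i = inv_G (endpoint_product i j)"
  using entry_closed by (simp add: entry_transpose[of i j] inv_G_op op_commute)

lemma endpoint_product_diagonal: "i < n \<Longrightarrow> endpoint_product i i = unit_G"
  using entry_closed arg_cong[where f = fst, OF entry_transpose[of i i]] by simp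

lemma endpoint_product_transitive_iff:
  assumes "i < n" "j < n" "k < n"
  shows "endpoint_product i k = op (op (endpoint_product i j) (fst (A j k))) (snd (A j k))
    \<longleftrightarrow> endpoint_product i k = op (endpoint_product i j) (endpoint_product j k)"
  using assms entry_closed by (simp add: op_assoc)

end

locale interval_reciprocal_IPCM = reciprocal_IPCM + interval_alo_group
begin

lemma G_consistent_at_iff:
  assumes "i < n" "j < n" "k < n"
  shows "set_op op (set_op op (int_set (A i j)) (int_set (A j k))) (int_set (A k i)) =
      set_op op (set_op op (int_set (A i k)) (int_set (A k j))) (int_set (A j i))
    \<longleftrightarrow> endpoint_product i k = op (endpoint_product i j) (endpoint_product j k)"
  unfolding int_set_def entry_transpose[OF assms(1,3)] entry_transpose[OF assms(2,3)]
    entry_transpose[OF assms(1,2)]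
  using assms entry_closed entry_le by (simp add: set_op_reciprocal_eq_iff)

lemma G_consistent_iff_transitive:
  "G_consistent op n A \<longleftrightarrow>
    (\<forall>i<n. \<forall>j<n. \<forall>k<n. endpoint_product i k = op (endpoint_product i j) (endpoint_product j k))"
  unfolding G_consistent_def by (simp add: G_consistent_at_iff)

lemma G_consistent_iff:
  "G_consistent op n A \<longleftrightarrow> (\<forall>i<n. \<forall>j<n. \<forall>k<n.
    endpoint_product i k = op (op (endpoint_product i j) (fst (A j k))) (snd (A j k)))"
  using G_consistent_iff_transitive endpoint_product_transitive_iff by simp

lemma G_consistent_iff_increasing:
  "G_consistent op n A \<longleftrightarrow> (\<forall>i j k. i < j \<and> j < k \<and> k < n \<longrightarrow>
    endpoint_product i k = op (op (endpoint_product i j) (fst (A j k))) (snd (A j k)))"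
proof -
  have "G_consistent op n A \<longleftrightarrow> (\<forall>i j k. i < j \<and> j < k \<and> k < n \<longrightarrow>
      endpoint_product i k = op (endpoint_product i j) (endpoint_product j k))"
    unfolding G_consistent_iff_transitive
    using endpoint_product_closed endpoint_product_transpose endpoint_product_diagonal
    by (rule transitive_iff_increasing_transitive)
  moreover have "endpoint_product i k = op (op (endpoint_product i j) (fst (A j k))) (snd (A j k))
      \<longleftrightarrow> endpoint_product i k = op (endpoint_product i j) (endpoint_product j k)"
    if "i < j" "j < k" "k < n" for i j k
    using that by (intro endpoint_product_transitive_iff) auto
  ultimately show ?thesis by blast
qed

end

theorem theorem4:
  fixes G :: "real set" and op :: "real \<Rightarrow> real \<Rightarrow> real"
    and n :: nat and A :: "nat \<Rightarrow> nat \<Rightarrow> real \<times> real"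
  assumes "continuous_alo_group G op"
    and "open G" and "is_interval G" and "G \<noteq> {}"
    and "is_IPCM G n A"
    and "G_reciprocal G op n A"
  shows "(G_consistent op n A \<longleftrightarrow>
           (\<forall>i<n. \<forall>j<n. \<forall>k<n.
              op (fst (A i k)) (snd (A i k)) =
              op (op (op (fst (A i j)) (snd (A i j))) (fst (A j k))) (snd (A j k))))
       \<and> (G_consistent op n A \<longleftrightarrow>
           (\<forall>i j k. i < j \<and> j < k \<and> k < n \<longrightarrow>
              op (fst (A i k)) (snd (A i k)) =
              op (op (op (fst (A i j)) (snd (A i j))) (fst (A j k))) (snd (A j k))))"
proof -
  interpret interval_reciprocal_IPCM G op n A
    using assms(1,3,5,6) unfolding continuous_alo_group_def
    by unfold_locales simp_all
  show ?thesis
    using G_consistent_iff G_consistent_iff_increasing by blast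
qed

end
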